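(* Let $q$ be a prime power, $n\ge 4$, $0\le h\le q^2-2$ and $(x,y)\in S_{\alpha^h}$. Then $$\left|\{z\in\Phi(n,q):(x,z)\in T,\ (z,y)\in T\}\right| = q^2\,|\Phi(n-2,q)|.$$ In particular (taking $h=0$) the valency of $T$ is $q^2|\Phi(n-2,q)|$.
   Context: Let $V=\mathbb{F}_{q^2}^m$ with Hermitian form $\langle x,y\rangle=\sum_k x_k y_k^{\,q}$ and $\Phi(m,q)=\{x\in\mathbb{F}_{q^2}^m\setminus\{0\}:\langle x,x\rangle=0\}$. Fix a primitive element $\alpha$ of $\mathbb{F}_{q^2}$. On $\Phi=\Phi(n,q)$ let $S_{\alpha^h}=\{(x,y)\in\Phi\times\Phi:y=\alpha^hx\}$ and $T=\{(x,y)\in\Phi\times\Phi:\langle x,y\rangle=0,\ y\notin\mathrm{Span}\{x\}\}$. *)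

theory Defs
  imports "HOL-Computational_Algebra.Primes"
begin

text \<open>Vectors of F_{q^2}^m are represented as lists of length m over a finite field
  type 'a with CARD('a) = q^2.\<close>

definition herm :: "nat \<Rightarrow> 'a::field list \<Rightarrow> 'a list \<Rightarrow> 'a" where
  "herm q x y = (\<Sum>k<length x. x ! k * (y ! k) ^ q)"

definition smult_vec :: "'a::field \<Rightarrow> 'a list \<Rightarrow> 'a list" where
  "smult_vec c x = map (\<lambda>a. c * a) x"

definition span1 :: "'a::field list \<Rightarrow> 'a list set" where
  "span1 x = {smult_vec c x | c. True}"

definition Phi :: "nat \<Rightarrow> nat \<Rightarrow> 'a::field list set" where
  "Phi m q = {x. length x = m \<and> x \<noteq> replicate m 0 \<and> herm q x x = 0}"

definition S_rel :: "nat \<Rightarrow> nat \<Rightarrow> 'a::field \<Rightarrow> ('a list \<times> 'a list) set" where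
  "S_rel n q c = {(x, y). x \<in> Phi n q \<and> y \<in> Phi n q \<and> y = smult_vec c x}"

definition T_rel :: "nat \<Rightarrow> nat \<Rightarrow> ('a::field list \<times> 'a list) set" where
  "T_rel n q = {(x, y). x \<in> Phi n q \<and> y \<in> Phi n q \<and> herm q x y = 0 \<and> y \<notin> span1 x}"

definition primitive_elem :: "'a::field \<Rightarrow> bool" where
  "primitive_elem a \<longleftrightarrow> (\<forall>z. z \<noteq> 0 \<longrightarrow> (\<exists>k::nat. z = a ^ k))"

end

theory Submission
  imports Defs "HOL-Number_Theory.Residues" "HOL-Computational_Algebra.Polynomial"
begin

text \<open>The common \<open>T\<close>-neighbours of \<open>x\<close> and of its multiple \<open>y\<close> are the isotropic vectors
  orthogonal to \<open>x\<close> outside \<open>\<langle>x\<rangle>\<close>. To count the isotropic \<open>z \<perp> x\<close>, complete \<open>x\<close> to a hyperbolic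
  pair \<open>(x, y')\<close> and write \<open>z = a x + b y' + w\<close> with \<open>w \<in> W = \<langle>x, y'\<rangle>\<^sup>\<perp>\<close>: then \<open>z \<perp> x\<close> iff
  \<open>b = 0\<close>, and such \<open>z\<close> is isotropic iff \<open>w\<close> is, so there are \<open>q\<^sup>2 A\<close> of them, \<open>A\<close> being the number of
  isotropic vectors in \<open>W\<close>. Splitting all isotropic vectors of \<open>\<bbbF>\<^sub>q\<^sub>\<^sup>2\<^sup>n\<close> in the same way, and
  comparing with the recursion for their number obtained from the norm equation \<open>a\<^sup>q\<^sup>+\<^sup>1 = c\<close>, shows
  that \<open>A\<close> is the number of isotropic vectors in dimension \<open>n - 2\<close>.\<close>

text \<open>The library's \<open>finite_field_power_card_eq_same\<close> is stated for the class \<open>finite_field\<close>,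
  which a type variable of sort \<open>{finite, field}\<close> is not known to belong to.\<close>
lemma power_card_eq_self:
  fixes x :: "'a::{finite,field}"
  shows "x ^ card (UNIV :: 'a set) = x"
proof (cases "x = 0")
  case False
  let ?U = "UNIV - {0::'a}"
  have "(\<lambda>y. x * y) ` ?U = ?U"
  proof (intro equalityI subsetI)
    fix y assume "y \<in> ?U"
    thus "y \<in> (\<lambda>y. x * y) ` ?U"
      using False by (intro image_eqI[of _ _ "y / x"]) auto
  qed (use False in auto)
  moreover have "inj_on (\<lambda>y. x * y) ?U"
    using False by (auto simp: inj_on_def)
  ultimately have "(\<Prod>y\<in>?U. x * y) = \<Prod>?U"
    using prod.reindex[of "\<lambda>y. x * y" ?U id] by simp
  hence "x ^ card ?U * \<Prod>?U = 1 * \<Prod>?U"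
    by (simp add: prod.distrib)
  hence "x ^ card ?U = 1"
    by (subst (asm) mult_right_cancel) auto
  moreover have "card (UNIV :: 'a set) = Suc (card ?U)"
    using finite_UNIV_card_ge_0[where ?'a = 'a] by (simp add: card_Diff_singleton)
  ultimately show ?thesis
    by (simp only: power_Suc mult_1_right)
qed (simp add: finite_UNIV_card_ge_0)

lemma frobenius_add:
  fixes a b :: "'a::{finite,field}"
  assumes "prime p" "card (UNIV :: 'a set) = p ^ k" "q = p ^ e"
  shows "(a + b) ^ q = a ^ q + b ^ q"
proof -
  have prime_char: "prime CHAR('a)"
    by (rule prime_CHAR_semidom, rule finite_imp_CHAR_pos) simp
  have "CHAR('a) dvd p ^ k"
    using CHAR_dvd_CARD[where ?'a = 'a] assms(2) by simp
  hence "CHAR('a) = p"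
    using prime_char assms(1) prime_dvd_power primes_dvd_imp_eq by blast
  thus ?thesis
    using freshmans_dream'[OF prime_char] assms(3) by blast
qed

lemma card_roots_trinomial_le:
  fixes c d :: "'a::field"
  assumes "2 \<le> k"
  shows "card {x. x ^ k + c * x + d = 0} \<le> k"
proof -
  define P where "P = monom 1 k + [:d, c:]"
  have deg: "degree P = k"
    unfolding P_def using assms
    by (subst degree_add_eq_left) (auto simp: degree_monom_eq degree_pCons_le)
  hence "card {x. poly P x = 0} \<le> k"
    using card_poly_roots_bound[of P] assms by fastforce
  moreover have "poly P x = x ^ k + c * x + d" for x
    unfolding P_def by (simp add: poly_monom algebra_simps)
  ultimately show ?thesis
    by simp
qed

lemma card_fibre_eq_if_le:
  assumes "finite A" "finite C" "f ` A \<subseteq> C" "\<And>r. card {a\<in>A. f a = r} \<le> k"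
    and "card C \<le> c" "card A = k * c" "r \<in> C"
  shows "card {a\<in>A. f a = r} = k"
proof -
  have "card A = card (\<Union>r\<in>C. {a\<in>A. f a = r})"
    using assms(3) by (intro arg_cong[of _ _ card]) auto
  also have "\<dots> = (\<Sum>r\<in>C. card {a\<in>A. f a = r})"
    by (rule card_UN_disjoint) (use assms(1,2) in auto)
  finally have "card A = (\<Sum>r\<in>C. card {a\<in>A. f a = r})" .
  moreover have "(\<Sum>r\<in>C. card {a\<in>A. f a = r}) \<le> (\<Sum>r\<in>C. k)"
    by (rule sum_mono) (use assms(4) in auto)
  moreover have "(\<Sum>r\<in>C. k) \<le> card A"
    using assms(5,6) by simp
  ultimately have "(\<Sum>r\<in>C. card {a\<in>A. f a = r}) = (\<Sum>r\<in>C. k)"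
    by linarith
  thus ?thesis
    by (rule sum_mono_inv) (use assms in auto)
qed

lemma card_filter_bij_betw:
  assumes "bij_betw f A B"
  shows "card {b\<in>B. P b} = card {a\<in>A. P (f a)}"
proof -
  have "{b\<in>B. P b} = f ` {a\<in>A. P (f a)}"
    using assms by (auto simp: bij_betw_def)
  moreover have "inj_on f {a\<in>A. P (f a)}"
    using assms by (auto simp: bij_betw_def inj_on_def)
  ultimately show ?thesis
    by (simp add: card_image)
qed

definition add_vec :: "'a::field list \<Rightarrow> 'a list \<Rightarrow> 'a list" where
  "add_vec u v = map2 (+) u v"

definition diff_vec :: "'a::field list \<Rightarrow> 'a list \<Rightarrow> 'a list" where
  "diff_vec u v = map2 (-) u v"

lemma length_add_vec [simp]: "length (add_vec u v) = min (length u) (length v)"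
  by (simp add: add_vec_def)

lemma length_diff_vec [simp]: "length (diff_vec u v) = min (length u) (length v)"
  by (simp add: diff_vec_def)

lemma length_smult_vec [simp]: "length (smult_vec c u) = length u"
  by (simp add: smult_vec_def)

lemma nth_add_vec [simp]: "k < length u \<Longrightarrow> k < length v \<Longrightarrow> add_vec u v ! k = u ! k + v ! k"
  by (simp add: add_vec_def)

lemma nth_diff_vec [simp]: "k < length u \<Longrightarrow> k < length v \<Longrightarrow> diff_vec u v ! k = u ! k - v ! k"
  by (simp add: diff_vec_def)

lemma nth_smult_vec [simp]: "k < length u \<Longrightarrow> smult_vec c u ! k = c * u ! k"
  by (simp add: smult_vec_def)

lemma smult_vec_0: "smult_vec 0 u = replicate (length u) 0"
  by (rule nth_equalityI) auto

lemma exists_nth_nonzero: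
  assumes "u \<noteq> replicate (length u) 0"
  shows "\<exists>i<length u. u ! i \<noteq> 0"
  using assms by (metis list_eq_iff_nth_eq length_replicate nth_replicate)

lemma card_span1:
  fixes u :: "'a::{finite,field} list"
  assumes "u \<noteq> replicate (length u) 0"
  shows "card (span1 u) = card (UNIV :: 'a set)"
proof -
  obtain i where i: "i < length u" "u ! i \<noteq> 0"
    using exists_nth_nonzero[OF assms] by blast
  have "inj (\<lambda>c. smult_vec c u)"
  proof (rule injI)
    fix c d assume "smult_vec c u = smult_vec d u"
    hence "smult_vec c u ! i = smult_vec d u ! i" by simp
    thus "c = d" using i by simp
  qed
  moreover have "span1 u = range (\<lambda>c. smult_vec c u)"
    by (auto simp: span1_def)
  ultimately show ?thesis
    by (simp add: card_image)
qed

section \<open>The Hermitian form\<close>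

text \<open>\<open>conj\<close> is the Frobenius involution \<open>t \<mapsto> t\<^sup>q\<close> of \<open>\<bbbF>\<^sub>q\<^sub>\<^sup>2\<close>; additivity is an assumption
  because it depends on \<open>q\<close> being a power of the characteristic.\<close>
locale unitary_field =
  fixes q :: nat and conj :: "'a::{finite,field} \<Rightarrow> 'a"
  assumes conj_def: "conj = (\<lambda>t. t ^ q)"
    and card_field: "card (UNIV :: 'a set) = q ^ 2"
    and conj_add: "conj (a + b) = conj a + conj b"
begin

lemma q_ge_2: "q \<ge> 2"
proof (rule ccontr)
  assume "\<not> q \<ge> 2"
  hence "card (UNIV :: 'a set) \<le> 1"
    using card_field by (cases q) (auto simp: power2_eq_square)
  moreover have "card {0, 1 :: 'a} \<le> card (UNIV :: 'a set)"
    by (rule card_mono) auto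
  ultimately show False
    by simp
qed

lemma conj_mult: "conj (a * b) = conj a * conj b"
  by (simp add: conj_def power_mult_distrib)

lemma conj_0 [simp]: "conj 0 = 0"
  using q_ge_2 by (simp add: conj_def)

lemma conj_1 [simp]: "conj 1 = 1"
  by (simp add: conj_def)

lemma conj_conj [simp]: "conj (conj a) = a"
  using power_card_eq_self[of a] card_field
  by (simp add: conj_def power_mult[symmetric] power2_eq_square)

lemma conj_eq_0_iff [simp]: "conj a = 0 \<longleftrightarrow> a = 0"
  by (metis conj_0 conj_conj)

lemma conj_minus: "conj (- a) = - conj a"
  using conj_add[of "- a" a] by (simp add: eq_neg_iff_add_eq_0)

lemma conj_divide: "conj (a / b) = conj a / conj b"
  by (simp add: conj_def power_divide)

lemma conj_sum: "conj (sum f A) = (\<Sum>i\<in>A. conj (f i))"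
  by (induction A rule: infinite_finite_induct) (auto simp: conj_add)

lemma herm_conj: "herm q u v = (\<Sum>k<length u. u ! k * conj (v ! k))"
  by (simp add: herm_def conj_def)

lemma herm_add_vec_left:
  fixes u v w :: "'a list"
  assumes "length v = length u" "length w = length u"
  shows "herm q (add_vec u v) w = herm q u w + herm q v w"
  using assms unfolding herm_conj by (simp add: sum.distrib[symmetric] distrib_right)

lemma herm_diff_vec_left:
  fixes u v w :: "'a list"
  assumes "length v = length u" "length w = length u"
  shows "herm q (diff_vec u v) w = herm q u w - herm q v w"
  using assms unfolding herm_conj by (simp add: sum_subtractf[symmetric] left_diff_distrib)

lemma herm_add_vec_right:
  fixes u v w :: "'a list"
  assumes "length v = length u" "length w = length u"
  shows "herm q u (add_vec v w) = herm q u v + herm q u w"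
  using assms unfolding herm_conj by (simp add: sum.distrib[symmetric] distrib_left conj_add)

lemma herm_smult_vec_left:
  fixes u w :: "'a list"
  shows "herm q (smult_vec c u) w = c * herm q u w"
  unfolding herm_conj by (simp add: sum_distrib_left mult.assoc)

lemma herm_smult_vec_right:
  fixes u w :: "'a list"
  assumes "length w = length u"
  shows "herm q u (smult_vec c w) = conj c * herm q u w"
  using assms unfolding herm_conj by (simp add: sum_distrib_left conj_mult mult_ac)

lemma conj_herm:
  fixes u v :: "'a list"
  assumes "length v = length u"
  shows "conj (herm q u v) = herm q v u"
  using assms unfolding herm_conj by (simp add: conj_sum conj_mult mult.commute)

lemma herm_eq_0_commute:
  fixes u v :: "'a list"
  assumes "length v = length u"
  shows "herm q u v = 0 \<longleftrightarrow> herm q v u = 0"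
  using conj_herm[OF assms] conj_eq_0_iff by metis

lemma conj_herm_self: "conj (herm q u u) = herm q u u"
  by (rule conj_herm) (rule refl)

lemma herm_Cons: "herm q (a # u) (b # v) = a * conj b + herm q u v"
  unfolding herm_conj by (simp add: sum.lessThan_Suc_shift del: sum.lessThan_Suc)

lemma card_conj_fixed_le: "card {r. conj r = r} \<le> q"
proof -
  have "{r. conj r = r} = {t. t ^ q + (- 1) * t + 0 = 0}"
    by (auto simp: conj_def)
  thus ?thesis
    using card_roots_trinomial_le[OF q_ge_2] by metis
qed

text \<open>The trace \<open>t + t\<^sup>q\<close> and the norm \<open>t\<^sup>q\<^sup>+\<^sup>1\<close> take values among the at most \<open>q\<close> points fixed by
  \<open>conj\<close>, and each of their fibres is the root set of a polynomial of degree \<open>q\<close> resp. \<open>q + 1\<close>;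
  counting the domain then forces every fibre over a fixed point to be full.\<close>
lemma card_trace_fibre:
  assumes "conj r = r"
  shows "card {t. t + conj t = r} = q"
proof -
  have "card {t\<in>UNIV. t + conj t = r} = q"
  proof (rule card_fibre_eq_if_le[where C = "{r. conj r = r}" and c = q])
    show "(\<lambda>t. t + conj t) ` UNIV \<subseteq> {r. conj r = r}"
      by (auto simp: conj_add add.commute)
    show "card {t\<in>UNIV. t + conj t = s} \<le> q" for s
    proof -
      have "{t\<in>UNIV. t + conj t = s} = {t. t ^ q + 1 * t + (- s) = 0}"
        by (auto simp: conj_def algebra_simps)
      thus ?thesis
        using card_roots_trinomial_le[OF q_ge_2] by metis
    qed
    show "card (UNIV :: 'a set) = q * q"
      using card_field by (simp add: power2_eq_square)
  qed (use assms card_conj_fixed_le in auto)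
  thus ?thesis
    by simp
qed

lemma card_norm_fibre:
  assumes "conj r = r" "r \<noteq> 0"
  shows "card {t. t * conj t = r} = q + 1"
proof -
  have card_fixed: "card {r. r \<noteq> 0 \<and> conj r = r} \<le> q - 1"
  proof -
    have "{r. r \<noteq> 0 \<and> conj r = r} = {r. conj r = r} - {0}"
      by auto
    thus ?thesis
      using card_conj_fixed_le by (simp add: card_Diff_singleton)
  qed
  have "card {t\<in>UNIV - {0}. t * conj t = r} = q + 1"
  proof (rule card_fibre_eq_if_le[where C = "{r. r \<noteq> 0 \<and> conj r = r}" and c = "q - 1"])
    show "(\<lambda>t. t * conj t) ` (UNIV - {0}) \<subseteq> {r. r \<noteq> 0 \<and> conj r = r}"
      by (auto simp: conj_mult mult.commute)
    show "card {t\<in>UNIV - {0}. t * conj t = s} \<le> q + 1" for s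
    proof -
      have "{t\<in>UNIV - {0}. t * conj t = s} \<subseteq> {t. t ^ (q + 1) + 0 * t + (- s) = 0}"
        by (auto simp: conj_def algebra_simps)
      hence "card {t\<in>UNIV - {0}. t * conj t = s} \<le> card {t. t ^ (q + 1) + 0 * t + (- s) = 0}"
        by (intro card_mono) auto
      also have "\<dots> \<le> q + 1"
        by (rule card_roots_trinomial_le) (use q_ge_2 in auto)
      finally show ?thesis .
    qed
    show "card (UNIV - {0::'a}) = (q + 1) * (q - 1)"
      using card_field q_ge_2 by (simp add: card_Diff_singleton power2_eq_square algebra_simps)
  qed (use assms card_fixed in auto)
  moreover have "{t\<in>UNIV - {0}. t * conj t = r} = {t. t * conj t = r}"
    using assms by auto
  ultimately show ?thesis
    by simp
qed

text \<open>The form \<open>(a, b) \<mapsto> a b\<^sup>q + b a\<^sup>q\<close> of a hyperbolic plane: for \<open>b \<noteq> 0\<close> it is the trace of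
  \<open>a b\<^sup>q\<close>, so each such \<open>b\<close> contributes \<open>q\<close> solutions, and \<open>b = 0\<close> contributes \<open>q\<^sup>2\<close> or none.\<close>
lemma card_hyperbolic_fibre:
  assumes "conj r = r"
  shows "card {(a, b). a * conj b + b * conj a = r} = q ^ 3 - q + (if r = 0 then q ^ 2 else 0)"
proof -
  define F where "F b = {a. a * conj b + b * conj a = r}" for b
  have "card {(a, b). a * conj b + b * conj a = r} = card (SIGMA b:UNIV. F b)"
    by (rule bij_betw_same_card[of "\<lambda>(a, b). (b, a)"]) (auto simp: bij_betw_def inj_on_def F_def image_iff)
  also have "\<dots> = card (F 0) + (\<Sum>b\<in>UNIV - {0}. card (F b))"
    by (simp add: card_SigmaI sum.remove)
  also have "(\<Sum>b\<in>UNIV - {0}. card (F b)) = (\<Sum>b\<in>UNIV - {0::'a}. q)"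
  proof (rule sum.cong[OF refl])
    fix b :: 'a assume "b \<in> UNIV - {0}"
    hence b: "b \<noteq> 0" by auto
    have "bij_betw (\<lambda>a. a * conj b) (F b) {t. t + conj t = r}"
    proof (rule bij_betw_byWitness[where f' = "\<lambda>t. t / conj b"])
      show "(\<lambda>a. a * conj b) ` F b \<subseteq> {t. t + conj t = r}"
        by (auto simp: F_def conj_mult mult.commute)
      show "(\<lambda>t. t / conj b) ` {t. t + conj t = r} \<subseteq> F b"
        using b by (auto simp: F_def conj_divide)
    qed (use b in auto)
    thus "card (F b) = q"
      using card_trace_fibre[OF assms] bij_betw_same_card by metis
  qed
  also have "\<dots> = (q ^ 2 - 1) * q"
    using card_field by (simp add: card_Diff_singleton)
  also have "card (F 0) = (if r = 0 then q ^ 2 else 0)"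
    using card_field by (auto simp: F_def)
  finally show ?thesis
    by (simp add: algebra_simps power3_eq_cube power2_eq_square diff_mult_distrib)
qed

section \<open>Counting isotropic vectors\<close>

definition isotropic_count :: "nat \<Rightarrow> nat" where
  "isotropic_count m = card {v :: 'a list. length v = m \<and> herm q v v = 0}"

lemma finite_vectors: "finite {v :: 'a list. length v = m}"
  using finite_lists_length_eq[of "UNIV :: 'a set" m] by simp

lemma card_vectors: "card {v :: 'a list. length v = m} = q ^ (2 * m)"
  using card_lists_length_eq[of "UNIV :: 'a set" m] card_field by (simp add: power_mult)

lemma isotropic_count_le: "isotropic_count m \<le> q ^ (2 * m)"
  unfolding isotropic_count_def card_vectors[symmetric] by (rule card_mono[OF finite_vectors]) auto

text \<open>A vector \<open>a # u\<close> is isotropic iff \<open>a\<^sup>q\<^sup>+\<^sup>1 = - herm u u\<close>, which has one solution if \<open>u\<close> is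
  isotropic and \<open>q + 1\<close> otherwise.\<close>
lemma isotropic_count_Suc:
  "isotropic_count (Suc m) = isotropic_count m + (q + 1) * (q ^ (2 * m) - isotropic_count m)"
proof -
  define V where "V = {v :: 'a list. length v = m}"
  define I where "I = {v :: 'a list. length v = m \<and> herm q v v = 0}"
  define G where "G u = {a. a * conj a = - herm q u u}" for u :: "'a list"
  have "{v. length v = Suc m \<and> herm q v v = 0} = (\<lambda>(u, a). a # u) ` (SIGMA u:V. G u)"
  proof (intro equalityI subsetI)
    fix v :: "'a list" assume "v \<in> {v. length v = Suc m \<and> herm q v v = 0}"
    then obtain a u where "v = a # u" "length u = m" "a * conj a = - herm q u u"
      by (cases v) (auto simp: herm_Cons eq_neg_iff_add_eq_0)
    thus "v \<in> (\<lambda>(u, a). a # u) ` (SIGMA u:V. G u)"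
      by (auto simp: V_def G_def image_iff)
  qed (auto simp: V_def G_def herm_Cons)
  hence "isotropic_count (Suc m) = card (SIGMA u:V. G u)"
    unfolding isotropic_count_def by (simp add: card_image inj_on_def)
  also have "\<dots> = (\<Sum>u\<in>V. if herm q u u = 0 then 1 else q + 1)"
  proof (simp add: card_SigmaI V_def finite_vectors, rule sum.cong[OF refl])
    fix u :: "'a list"
    have "conj (- herm q u u) = - herm q u u"
      by (simp add: conj_minus conj_herm_self)
    thus "card (G u) = (if herm q u u = 0 then 1 else q + 1)"
      using card_norm_fibre[of "- herm q u u"] by (auto simp: G_def)
  qed
  also have "\<dots> = card I + (q + 1) * card (V - I)"
  proof -
    have "V \<inter> {u. herm q u u = 0} = I" "V \<inter> - {u. herm q u u = 0} = V - I"
      by (auto simp: V_def I_def)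
    moreover have "finite V"
      by (simp add: V_def finite_vectors)
    ultimately show ?thesis
      by (simp add: sum.If_cases)
  qed
  also have "card (V - I) = q ^ (2 * m) - card I"
    by (subst card_Diff_subset) (auto simp: V_def I_def finite_vectors card_vectors)
  finally show ?thesis
    by (simp add: isotropic_count_def I_def)
qed

lemma isotropic_count_Suc_Suc:
  "int (isotropic_count (Suc (Suc m)))
     = int q ^ 2 * int (isotropic_count m) + (int q ^ 3 - int q) * int q ^ (2 * m)"
proof -
  have step: "int (isotropic_count (Suc k)) = (int q + 1) * int q ^ (2 * k) - int q * int (isotropic_count k)" for k
  proof -
    obtain d where d: "q ^ (2 * k) = isotropic_count k + d"
      using isotropic_count_le[of k] le_Suc_ex by blast
    hence "int q ^ (2 * k) = int (isotropic_count k) + int d"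
      by (metis of_nat_add of_nat_power)
    thus ?thesis
      using isotropic_count_Suc[of k] d by (simp add: algebra_simps)
  qed
  show ?thesis
    unfolding step[of "Suc m"] step[of m] by (simp add: algebra_simps power2_eq_square power3_eq_cube)
qed

text \<open>The witness is \<open>y\<^sub>0 + s x\<close>, where \<open>y\<^sub>0\<close> is a scaled unit vector with \<open>herm x y\<^sub>0 = 1\<close> and
  \<open>s + s\<^sup>q = - herm y\<^sub>0 y\<^sub>0\<close> is solvable because the trace is onto the \<open>conj\<close>-fixed points.\<close>
lemma exists_hyperbolic_partner:
  fixes x :: "'a list"
  assumes "x \<noteq> replicate (length x) 0" "herm q x x = 0"
  shows "\<exists>y. length y = length x \<and> herm q y y = 0 \<and> herm q x y = 1"
proof -
  obtain i where i: "i < length x" "x ! i \<noteq> 0"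
    using exists_nth_nonzero[OF assms(1)] by blast
  define y0 where "y0 = (replicate (length x) 0)[i := conj (inverse (x ! i))]"
  have "herm q x y0 = (\<Sum>k<length x. if k = i then x ! i * inverse (x ! i) else 0)"
    unfolding herm_conj by (rule sum.cong) (auto simp: y0_def nth_list_update)
  hence x_y0: "herm q x y0 = 1"
    using i by simp
  hence y0_x: "herm q y0 x = 1"
    using conj_herm[of y0 x] by (simp add: y0_def)
  have "conj (- herm q y0 y0) = - herm q y0 y0"
    by (simp add: conj_minus conj_herm_self)
  hence "card {s. s + conj s = - herm q y0 y0} = q"
    by (rule card_trace_fibre)
  then obtain s where s: "s + conj s = - herm q y0 y0"
    using q_ge_2 by (metis (mono_tags, lifting) card.empty empty_Collect_eq not_numeral_le_zero)
  define y where "y = add_vec y0 (smult_vec s x)"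
  have "herm q y y = herm q y0 y0 + (conj s * herm q y0 x + s * herm q x y0) + s * conj s * herm q x x"
    unfolding y_def
    by (simp add: y0_def herm_add_vec_left herm_add_vec_right herm_smult_vec_left herm_smult_vec_right
        algebra_simps)
  hence "herm q y y = 0"
    using s x_y0 y0_x assms(2) by (simp add: algebra_simps eq_neg_iff_add_eq_0)
  moreover have "herm q x y = 1"
    unfolding y_def using assms(2) x_y0
    by (simp add: y0_def herm_add_vec_right herm_smult_vec_right)
  moreover have "length y = length x"
    by (simp add: y_def y0_def)
  ultimately show ?thesis
    by blast
qed

end


section \<open>Splitting off a hyperbolic pair\<close>

locale hyperbolic_pair = unitary_field q conj
  for q :: nat and conj :: "'a::{finite,field} \<Rightarrow> 'a" +
  fixes n :: nat and x y :: "'a list"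
  assumes length_x: "length x = n" and length_y: "length y = n"
    and isotropic_x: "herm q x x = 0" and isotropic_y: "herm q y y = 0"
    and herm_x_y: "herm q x y = 1"
begin

lemma herm_y_x: "herm q y x = 1"
  using conj_herm[of y x] herm_x_y by (simp add: length_x length_y)

definition perp :: "'a list set" where
  "perp = {w. length w = n \<and> herm q w x = 0 \<and> herm q w y = 0}"

definition hyp_sum :: "'a list \<times> 'a \<times> 'a \<Rightarrow> 'a list" where
  "hyp_sum = (\<lambda>(w, a, b). add_vec (add_vec (smult_vec a x) (smult_vec b y)) w)"

lemma length_hyp_sum: "length w = n \<Longrightarrow> length (hyp_sum (w, a, b)) = n"
  by (simp add: hyp_sum_def length_x length_y)

lemma herm_hyp_sum_left:
  assumes "length w = n" "length u = n"
  shows "herm q (hyp_sum (w, a, b)) u = a * herm q x u + b * herm q y u + herm q w u"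
  using assms by (simp add: hyp_sum_def herm_add_vec_left herm_smult_vec_left length_x length_y)

lemma herm_hyp_sum_right:
  assumes "length w = n" "length u = n"
  shows "herm q u (hyp_sum (w, a, b)) = conj a * herm q u x + conj b * herm q u y + herm q u w"
  using assms by (simp add: hyp_sum_def herm_add_vec_right herm_smult_vec_right length_x length_y)

definition hyp_coords :: "'a list \<Rightarrow> 'a list \<times> 'a \<times> 'a" where
  "hyp_coords z = (diff_vec (diff_vec z (smult_vec (herm q z y) x)) (smult_vec (herm q z x) y),
                   herm q z y, herm q z x)"

lemma bij_betw_hyp_sum: "bij_betw hyp_sum (perp \<times> UNIV) {z. length z = n}"
proof (rule bij_betw_byWitness[where f' = hyp_coords])
  show "\<forall>p\<in>perp \<times> UNIV. hyp_coords (hyp_sum p) = p"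
  proof
    fix p assume "p \<in> perp \<times> (UNIV :: ('a \<times> 'a) set)"
    then obtain w a b where p: "p = (w, a, b)" and w: "length w = n" "herm q w x = 0" "herm q w y = 0"
      by (auto simp: perp_def)
    have "diff_vec (diff_vec (hyp_sum (w, a, b)) (smult_vec a x)) (smult_vec b y) = w"
      by (rule nth_equalityI) (auto simp: hyp_sum_def length_x length_y w)
    thus "hyp_coords (hyp_sum p) = p"
      using w by (simp add: p hyp_coords_def herm_hyp_sum_left length_x length_y
          isotropic_x isotropic_y herm_x_y herm_y_x)
  qed
  show "\<forall>z\<in>{z. length z = n}. hyp_sum (hyp_coords z) = z"
    by (auto intro!: nth_equalityI simp: hyp_sum_def hyp_coords_def length_x length_y)
  show "hyp_sum ` (perp \<times> UNIV) \<subseteq> {z. length z = n}"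
    by (auto simp: perp_def length_hyp_sum)
  show "hyp_coords ` {z. length z = n} \<subseteq> perp \<times> UNIV"
    by (auto simp: perp_def hyp_coords_def herm_diff_vec_left herm_smult_vec_left length_x length_y
        isotropic_x isotropic_y herm_x_y herm_y_x)
qed

lemma herm_hyp_sum_self:
  assumes "w \<in> perp"
  shows "herm q (hyp_sum (w, a, b)) (hyp_sum (w, a, b)) = a * conj b + b * conj a + herm q w w"
proof -
  from assms have w: "length w = n" "herm q w x = 0" "herm q w y = 0"
    by (auto simp: perp_def)
  moreover from w have "herm q x w = 0" "herm q y w = 0"
    using herm_eq_0_commute length_x length_y by auto
  ultimately show ?thesis
    by (simp add: herm_hyp_sum_left herm_hyp_sum_right length_hyp_sum length_x length_y
        isotropic_x isotropic_y herm_x_y herm_y_x algebra_simps)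
qed

lemma herm_x_hyp_sum:
  assumes "w \<in> perp"
  shows "herm q x (hyp_sum (w, a, b)) = conj b"
  using assms by (simp add: perp_def herm_hyp_sum_right length_x isotropic_x herm_x_y
      herm_eq_0_commute[of w x])

lemma finite_perp: "finite perp"
  using finite_vectors[of n] by (rule rev_finite_subset) (auto simp: perp_def)

lemma card_perp: "q ^ (2 * n) = card perp * q ^ 4"
  using bij_betw_same_card[OF bij_betw_hyp_sum]
  by (simp add: card_vectors card_cartesian_product card_field flip: UNIV_Times_UNIV)

lemma isotropic_count_hyperbolic:
  "isotropic_count n = card perp * (q ^ 3 - q) + q ^ 2 * card {w\<in>perp. herm q w w = 0}"
proof -
  have "isotropic_count n = card {p\<in>perp \<times> UNIV. herm q (hyp_sum p) (hyp_sum p) = 0}"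
    unfolding isotropic_count_def using card_filter_bij_betw[OF bij_betw_hyp_sum] by simp
  also have "{p\<in>perp \<times> UNIV. herm q (hyp_sum p) (hyp_sum p) = 0}
      = (SIGMA w:perp. {(a, b). a * conj b + b * conj a = - herm q w w})"
    by (auto simp: herm_hyp_sum_self eq_neg_iff_add_eq_0 add.assoc)
  also have "card \<dots> = (\<Sum>w\<in>perp. q ^ 3 - q + (if herm q w w = 0 then q ^ 2 else 0))"
    by (simp add: card_SigmaI finite_perp card_hyperbolic_fibre conj_minus conj_herm_self)
  also have "\<dots> = card perp * (q ^ 3 - q) + q ^ 2 * card {w\<in>perp. herm q w w = 0}"
    by (simp add: sum.distrib sum.inter_filter[OF finite_perp, symmetric])
  finally show ?thesis .
qed

lemma card_isotropic_orthogonal_x: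
  "card {z. length z = n \<and> herm q z z = 0 \<and> herm q x z = 0} = q ^ 2 * card {w\<in>perp. herm q w w = 0}"
proof -
  have "card {z. length z = n \<and> herm q z z = 0 \<and> herm q x z = 0}
      = card {p\<in>perp \<times> UNIV. herm q (hyp_sum p) (hyp_sum p) = 0 \<and> herm q x (hyp_sum p) = 0}"
    using card_filter_bij_betw[OF bij_betw_hyp_sum] by simp
  also have "{p\<in>perp \<times> UNIV. herm q (hyp_sum p) (hyp_sum p) = 0 \<and> herm q x (hyp_sum p) = 0}
      = (\<lambda>(w, a). (w, a, 0)) ` ({w\<in>perp. herm q w w = 0} \<times> UNIV)"
    by (auto simp: herm_hyp_sum_self herm_x_hyp_sum image_iff)
  also have "card \<dots> = q ^ 2 * card {w\<in>perp. herm q w w = 0}"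
    by (simp add: card_image inj_on_def card_cartesian_product card_field)
  finally show ?thesis .
qed

end

section \<open>Common neighbours in \<open>T\<close>\<close>

context unitary_field
begin

lemma card_isotropic_orthogonal:
  fixes x :: "'a list"
  assumes "length x = Suc (Suc m)" "x \<noteq> replicate (length x) 0" "herm q x x = 0"
  shows "card {z. length z = Suc (Suc m) \<and> herm q z z = 0 \<and> herm q x z = 0} = q ^ 2 * isotropic_count m"
proof -
  obtain y where y: "length y = length x" "herm q y y = 0" "herm q x y = 1"
    using exists_hyperbolic_partner[OF assms(2,3)] by blast
  interpret hyperbolic_pair q conj "Suc (Suc m)" x y
    by unfold_locales (use assms y in auto)
  have "2 * Suc (Suc m) = 2 * m + 4"
    by simp
  hence "q ^ (2 * m) * q ^ 4 = card perp * q ^ 4"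
    using card_perp by (simp only: power_add)
  hence card_perp_eq: "card perp = q ^ (2 * m)"
    using q_ge_2 by simp
  have "int q ^ 2 * int (card {w\<in>perp. herm q w w = 0}) = int q ^ 2 * int (isotropic_count m)"
    using isotropic_count_hyperbolic isotropic_count_Suc_Suc[of m] q_ge_2
    by (simp add: card_perp_eq of_nat_diff power3_eq_cube)
  hence "card {w\<in>perp. herm q w w = 0} = isotropic_count m"
    using q_ge_2 by simp
  thus ?thesis
    using card_isotropic_orthogonal_x by simp
qed

lemma card_Phi: "card (Phi m q :: 'a list set) = isotropic_count m - 1"
proof -
  have "(Phi m q :: 'a list set) = {v. length v = m \<and> herm q v v = 0} - {replicate m 0}"
    by (auto simp: Phi_def)
  moreover have "replicate m 0 \<in> {v :: 'a list. length v = m \<and> herm q v v = 0}"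
    by (simp add: herm_def)
  moreover have "finite {v :: 'a list. length v = m \<and> herm q v v = 0}"
    using finite_vectors[of m] by (rule rev_finite_subset) auto
  ultimately show ?thesis
    by (simp add: isotropic_count_def card_Diff_singleton)
qed

text \<open>Since \<open>y\<close> is a nonzero multiple of \<open>x\<close>, both adjacency conditions reduce to \<open>z \<perp> x\<close>,
  \<open>z \<notin> \<langle>x\<rangle>\<close>.\<close>
lemma common_T_neighbours:
  fixes x y :: "'a list"
  assumes "(x, y) \<in> S_rel n q c"
  shows "{z \<in> Phi n q. (x, z) \<in> T_rel n q \<and> (z, y) \<in> T_rel n q}
           = {z. length z = n \<and> herm q z z = 0 \<and> herm q x z = 0} - span1 x"
proof (intro equalityI subsetI)
  fix z assume "z \<in> {z \<in> Phi n q. (x, z) \<in> T_rel n q \<and> (z, y) \<in> T_rel n q}"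
  thus "z \<in> {z. length z = n \<and> herm q z z = 0 \<and> herm q x z = 0} - span1 x"
    by (auto simp: T_rel_def Phi_def)
next
  from assms have x: "x \<in> Phi n q" and y: "y \<in> Phi n q" and y_eq: "y = smult_vec c x"
    by (auto simp: S_rel_def)
  fix z assume "z \<in> {z. length z = n \<and> herm q z z = 0 \<and> herm q x z = 0} - span1 x"
  hence z: "length z = n" "herm q z z = 0" "herm q x z = 0" "z \<notin> span1 x"
    by auto
  have "z \<noteq> replicate n 0"
    using z(4) x by (auto simp: span1_def Phi_def smult_vec_0[symmetric])
  hence z_Phi: "z \<in> Phi n q"
    using z by (simp add: Phi_def)
  have "herm q z y = 0"
    using z x by (simp add: y_eq herm_smult_vec_right Phi_def herm_eq_0_commute[of z x])
  moreover have "y \<notin> span1 z"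
  proof
    assume "y \<in> span1 z"
    then obtain d where d: "y = smult_vec d z"
      by (auto simp: span1_def)
    hence "d \<noteq> 0"
      using y z(1) by (auto simp: Phi_def smult_vec_0)
    have "d * z ! k = c * x ! k" if "k < n" for k
      using arg_cong[OF d, of "\<lambda>v. v ! k"] that x z(1) by (simp add: y_eq Phi_def)
    hence "z = smult_vec (c / d) x"
      using x z(1) \<open>d \<noteq> 0\<close> by (intro nth_equalityI) (auto simp: Phi_def field_simps)
    thus False
      using z(4) by (auto simp: span1_def)
  qed
  ultimately show "z \<in> {z \<in> Phi n q. (x, z) \<in> T_rel n q \<and> (z, y) \<in> T_rel n q}"
    using x y z z_Phi by (simp add: T_rel_def)
qed

end

theorem lemma3p2:
  fixes \<alpha> :: "'a::{finite, field}" and q p e n h :: nat and x y :: "'a list"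
  assumes "prime p" and "e \<ge> 1" and "q = p ^ e"
    and "card (UNIV :: 'a set) = q ^ 2"
    and "primitive_elem \<alpha>"
    and "n \<ge> 4"
    and "h \<le> q ^ 2 - 2"
    and "(x, y) \<in> S_rel n q (\<alpha> ^ h)"
  shows "card {z \<in> (Phi n q :: 'a list set). (x, z) \<in> T_rel n q \<and> (z, y) \<in> T_rel n q}
           = q ^ 2 * card (Phi (n - 2) q :: 'a list set)"
proof -
  have card_p: "card (UNIV :: 'a set) = p ^ (e * 2)"
    using assms(3,4) by (simp add: power_mult)
  interpret unitary_field q "\<lambda>t::'a. t ^ q"
    by unfold_locales (use assms(4) frobenius_add[OF assms(1) card_p assms(3)] in auto)
  obtain m where n: "n = Suc (Suc m)"
    using assms(6) by (intro that[of "n - 2"]) simp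
  from assms(8) have x: "length x = n" "x \<noteq> replicate n 0" "herm q x x = 0"
    by (auto simp: S_rel_def Phi_def)
  let ?O = "{z. length z = n \<and> herm q z z = 0 \<and> herm q x z = 0}"
  have span_sub: "span1 x \<subseteq> ?O"
    using x by (auto simp: span1_def herm_smult_vec_left herm_smult_vec_right)
  have "finite ?O"
    using finite_vectors[of n] by (rule rev_finite_subset) auto
  moreover have "card ?O = q ^ 2 * isotropic_count m"
    using card_isotropic_orthogonal[of x m] x n by simp
  moreover have "card (span1 x) = q ^ 2"
    using card_span1[of x] x assms(4) by simp
  ultimately have "card (?O - span1 x) = q ^ 2 * isotropic_count m - q ^ 2"
    using span_sub by (simp add: card_Diff_subset finite_subset)
  thus ?thesis
    using common_T_neighbours[OF assms(8)] card_Phi[of m] n by (simp add: diff_mult_distrib2)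
qed

end
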